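(* Let $r\ge 2$ be an integer, $\overline{x}\in\mathbb{R}^n$, let $f:\mathbb{R}^n\to\mathbb{R}$ be of class $C^r$ on an open neighbourhood $V$ of $\overline{x}$, and set $\Sigma:=\{x\in V\mid\nabla f(x)=0\}$. Let $c,\delta,\overline{w}>0$ satisfy $$\|\nabla f(x)\|\ge c\,\mathrm{dist}(x,\Sigma)^{r-1}\quad\text{for all }x\in\mathcal{H}_r^{\Sigma}(f,\overline{x};\overline{w})\cap\mathbb{B}_\delta(\overline{x}).$$ If $f$ has a local minimum at $\overline{x}$, then there exists $\epsilon>0$ such that for every function $h:\mathbb{R}^n\to\mathbb{R}$ for which there is $\rho>0$ with $|h(x)-h(\overline{x})|\le\epsilon\,\|\nabla f(x)\|^r$ for all $x\in\mathbb{B}_\rho(\overline{x})$, the function $f+h$ has a local minimum at $\overline{x}$.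
   Context: $\mathbb{B}_\delta(x)$ denotes the closed Euclidean ball of radius $\delta$ centered at $x$, and $\mathrm{dist}(x,\Sigma)=\inf_{y\in\Sigma}\|x-y\|$. The horn-neighbourhood of degree $r$ and width $\overline{w}>0$ is $\mathcal{H}_r^{\Sigma}(f,\overline{x};\overline{w}):=\{x\in\mathbb{R}^n\mid |f(x)-f(\overline{x})|\le\overline{w}\,\mathrm{dist}(x,\Sigma)^r\}$. *)

theory Defs
  imports "HOL-Analysis.Analysis"
begin

definition grad :: "('a::euclidean_space \<Rightarrow> real) \<Rightarrow> 'a \<Rightarrow> 'a" where
  "grad f x = (\<Sum>i\<in>Basis. frechet_derivative f (at x) i *\<^sub>R i)"

fun Ck_on :: "nat \<Rightarrow> 'a::euclidean_space set \<Rightarrow> ('a \<Rightarrow> real) \<Rightarrow> bool" where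
  "Ck_on 0 V f = continuous_on V f"
| "Ck_on (Suc k) V f = ((\<forall>x\<in>V. f differentiable (at x)) \<and>
      (\<forall>i\<in>Basis. Ck_on k V (\<lambda>x. frechet_derivative f (at x) i)))"

definition crit_set :: "('a::euclidean_space \<Rightarrow> real) \<Rightarrow> 'a set \<Rightarrow> 'a set" where
  "crit_set f V = {x\<in>V. grad f x = 0}"

definition horn_nbhd :: "nat \<Rightarrow> 'a::euclidean_space set \<Rightarrow> ('a \<Rightarrow> real) \<Rightarrow> 'a \<Rightarrow> real \<Rightarrow> 'a set" where
  "horn_nbhd r \<Sigma> f xbar w = {x. \<bar>f x - f xbar\<bar> \<le> w * infdist x \<Sigma> ^ r}"

definition local_min_at :: "('a::metric_space \<Rightarrow> real) \<Rightarrow> 'a \<Rightarrow> bool" where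
  "local_min_at f x \<longleftrightarrow> (\<exists>e>0. \<forall>y\<in>ball x e. f x \<le> f y)"

end

theory Submission
  imports Defs
begin

text \<open>
  Since \<open>r \<ge> 2\<close>, the gradient of \<open>f\<close> is \<open>L\<close>-Lipschitz near the minimiser \<open>xbar\<close>.
  A gradient step \<open>x - \<nabla>f(x)/(2L)\<close> stays near \<open>xbar\<close> and lowers \<open>f\<close> by at least
  \<open>\<parallel>\<nabla>f(x)\<parallel>\<^sup>2/(4L)\<close>, so minimality gives \<open>\<parallel>\<nabla>f(x)\<parallel>\<^sup>2 \<le> 4L (f x - f xbar)\<close>.
  Near \<open>xbar\<close> also \<open>\<parallel>\<nabla>f(x)\<parallel> \<le> 1\<close>, hence \<open>\<parallel>\<nabla>f(x)\<parallel>\<^sup>r \<le> \<parallel>\<nabla>f(x)\<parallel>\<^sup>2\<close>, and a perturbation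
  \<open>h\<close> with \<open>\<epsilon> = 1/(4L)\<close> cannot destroy the minimum.
\<close>

lemma Ck_on_imp_continuous_on: "Ck_on k V f \<Longrightarrow> continuous_on V f"
proof (induction k arbitrary: f)
  case 0
  then show ?case by simp
next
  case (Suc k)
  then show ?case
    by (auto intro!: continuous_at_imp_continuous_on differentiable_imp_continuous_within)
qed

lemma frechet_derivative_eq_inner_grad:
  fixes f :: "'a::euclidean_space \<Rightarrow> real"
  assumes "f differentiable (at x)"
  shows "frechet_derivative f (at x) v = grad f x \<bullet> v"
proof -
  let ?D = "frechet_derivative f (at x)"
  have "linear ?D" using assms by (rule linear_frechet_derivative)
  have "?D v = ?D (\<Sum>i\<in>Basis. (v \<bullet> i) *\<^sub>R i)" by (simp add: euclidean_representation)
  also have "\<dots> = (\<Sum>i\<in>Basis. (v \<bullet> i) * ?D i)"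
    using \<open>linear ?D\<close> by (simp add: linear_sum linear_scale)
  also have "\<dots> = grad f x \<bullet> v"
    unfolding grad_def inner_sum_left by (intro sum.cong refl) (simp add: inner_commute)
  finally show ?thesis .
qed

lemma local_min_at_imp_grad_eq_0:
  fixes f :: "'a::euclidean_space \<Rightarrow> real"
  assumes "local_min_at f x" and "f differentiable (at x)"
  shows "grad f x = 0"
proof -
  obtain e where "e > 0" "\<forall>y\<in>ball x e. f x \<le> f y"
    using assms(1) unfolding local_min_at_def by blast
  then have "frechet_derivative f (at x) = (\<lambda>v. 0)"
    using assms(2) by (intro differential_zero_maxmin[of x "ball x e"]) (auto simp: frechet_derivative_works)
  then show ?thesis unfolding grad_def by simp
qed

lemma lipschitz_on_sum:
  fixes f :: "'i \<Rightarrow> 'a::metric_space \<Rightarrow> 'b::real_normed_vector"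
  assumes "finite I" and "\<forall>i\<in>I. (C i)-lipschitz_on U (f i)"
  shows "(\<Sum>i\<in>I. C i)-lipschitz_on U (\<lambda>x. \<Sum>i\<in>I. f i x)"
  using assms by (induction I rule: finite_induct) (auto intro: lipschitz_on_add lipschitz_on_constant)

lemma lipschitz_on_scaleR_const:
  fixes g :: "'a::metric_space \<Rightarrow> real"
  assumes "C-lipschitz_on U g"
  shows "(C * norm v)-lipschitz_on U (\<lambda>x. g x *\<^sub>R v)"
proof (rule lipschitz_onI)
  show "0 \<le> C * norm v" using lipschitz_on_nonneg[OF assms] by simp
  fix x y assume "x \<in> U" "y \<in> U"
  then have "\<bar>g x - g y\<bar> * norm v \<le> C * dist x y * norm v"
    using lipschitz_onD[OF assms] by (intro mult_right_mono) (auto simp: dist_real_def)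
  then show "dist (g x *\<^sub>R v) (g y *\<^sub>R v) \<le> C * norm v * dist x y"
    by (simp add: dist_norm flip: scaleR_diff_left) (simp add: ac_simps)
qed

lemma continuous_partials_imp_lipschitz:
  fixes g :: "'a::euclidean_space \<Rightarrow> 'b::real_normed_vector"
  assumes "compact S" and "convex S" and "\<forall>x\<in>S. g differentiable (at x)"
    and "\<forall>i\<in>Basis. continuous_on S (\<lambda>x. frechet_derivative g (at x) i)"
  shows "\<exists>B. B-lipschitz_on S g"
proof -
  let ?D = "\<lambda>x. frechet_derivative g (at x)"
  have "continuous_on S (\<lambda>x. \<Sum>i\<in>Basis. norm (?D x i))"
    using assms(4) by (intro continuous_on_sum continuous_on_norm) auto
  then have "bounded ((\<lambda>x. \<Sum>i\<in>Basis. norm (?D x i)) ` S)"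
    using assms(1) by (intro compact_imp_bounded compact_continuous_image)
  then obtain B where "B > 0" and B: "\<forall>x\<in>S. norm (\<Sum>i\<in>Basis. norm (?D x i)) \<le> B"
    unfolding bounded_pos by blast
  have "onorm (?D x) \<le> B" if "x \<in> S" for x
  proof -
    have "bounded_linear (?D x)"
      using assms(3) that by (meson frechet_derivative_works has_derivative_bounded_linear)
    then have "onorm (?D x) \<le> (\<Sum>i\<in>Basis. norm (?D x i))" by (rule onorm_componentwise)
    also have "\<dots> \<le> B" using B that by auto
    finally show ?thesis .
  qed
  moreover have "(g has_derivative ?D x) (at x within S)" if "x \<in> S" for x
    using assms(3) that by (meson frechet_derivative_works has_derivative_at_withinI)
  ultimately have "B-lipschitz_on S g"
    using \<open>B > 0\<close> assms(2) by (intro bounded_derivative_imp_lipschitz) auto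
  then show ?thesis ..
qed

lemma Ck_on_2_imp_grad_lipschitz:
  fixes f :: "'a::euclidean_space \<Rightarrow> real"
  assumes "Ck_on (Suc (Suc k)) V f" and "compact S" and "convex S" and "S \<subseteq> V"
  shows "\<exists>L>0. L-lipschitz_on S (grad f)"
proof -
  let ?g = "\<lambda>i x. frechet_derivative f (at x) i"
  have "\<exists>B. B-lipschitz_on S (?g i)" if "i \<in> Basis" for i
  proof (rule continuous_partials_imp_lipschitz[OF assms(2,3)])
    have "Ck_on (Suc k) V (?g i)" using assms(1) that by simp
    then show "\<forall>x\<in>S. ?g i differentiable (at x)"
      and "\<forall>j\<in>Basis. continuous_on S (\<lambda>x. frechet_derivative (?g i) (at x) j)"
      using assms(4) by (auto intro: continuous_on_subset[OF Ck_on_imp_continuous_on])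
  qed
  then obtain B where "\<forall>i\<in>Basis. (B i)-lipschitz_on S (?g i)" by metis
  then have "(\<Sum>i\<in>Basis. B i * norm i)-lipschitz_on S (grad f)" (is "?C-lipschitz_on S _")
    unfolding grad_def by (intro lipschitz_on_sum lipschitz_on_scaleR_const ballI) auto
  then show ?thesis
    by (intro exI[of _ "?C + 1"]) (auto intro: lipschitz_on_le add_nonneg_pos lipschitz_on_nonneg)
qed

lemma quadratic_upper_bound_of_lipschitz_grad:
  fixes f :: "'a::euclidean_space \<Rightarrow> real"
  assumes "convex S" and diff: "\<forall>z\<in>S. f differentiable (at z)"
    and lip: "L-lipschitz_on S (grad f)" and "x \<in> S" and "y \<in> S"
  shows "f y \<le> f x + grad f x \<bullet> (y - x) + L * norm (y - x) ^ 2"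
proof -
  let ?D = "\<lambda>z. frechet_derivative f (at z)"
  let ?seg = "closed_segment x y"
  have seg: "?seg \<subseteq> S" using assms by (simp add: closed_segment_subset)
  have "norm (f y - f x - ?D x (y - x)) \<le> norm (y - x) * (L * norm (y - x))"
  proof (rule differentiable_bound_linearization[where S = ?seg])
    show "x + t *\<^sub>R (y - x) \<in> ?seg" if "t \<in> {0..1}" for t
      using that by (auto simp: in_segment algebra_simps intro!: exI[of _ t])
    show "(f has_derivative ?D z) (at z within ?seg)" if "z \<in> ?seg" for z
      using diff seg that by (meson subsetD frechet_derivative_works has_derivative_at_withinI)
    show "onorm (?D z - ?D x) \<le> L * norm (y - x)" if z: "z \<in> ?seg" for z
    proof (rule onorm_le)
      fix v
      have "norm ((?D z - ?D x) v) = \<bar>(grad f z - grad f x) \<bullet> v\<bar>"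
        using diff seg z \<open>x \<in> S\<close> by (auto simp: frechet_derivative_eq_inner_grad inner_diff_left)
      also have "\<dots> \<le> norm (grad f z - grad f x) * norm v" by (rule Cauchy_Schwarz_ineq2)
      also have "\<dots> \<le> L * norm (y - x) * norm v"
      proof (intro mult_right_mono)
        have "norm (grad f z - grad f x) \<le> L * norm (z - x)"
          using lip seg z \<open>x \<in> S\<close> by (auto intro: lipschitz_on_normD)
        also have "\<dots> \<le> L * norm (y - x)"
          using dist_in_closed_segment[OF z] lipschitz_on_nonneg[OF lip]
          by (intro mult_left_mono) (auto simp: dist_norm norm_minus_commute)
        finally show "norm (grad f z - grad f x) \<le> L * norm (y - x)" .
      qed simp
      finally show "norm ((?D z - ?D x) v) \<le> L * norm (y - x) * norm v" .
    qed
  qed simp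
  moreover have "?D x (y - x) = grad f x \<bullet> (y - x)"
    using diff \<open>x \<in> S\<close> by (simp add: frechet_derivative_eq_inner_grad)
  moreover have "norm (y - x) * (L * norm (y - x)) = L * norm (y - x) ^ 2"
    by (simp add: power2_eq_square)
  ultimately show ?thesis by (simp add: abs_le_iff)
qed

lemma norm_grad_sq_le_at_min:
  fixes f :: "'a::euclidean_space \<Rightarrow> real"
  assumes diff: "\<forall>z\<in>cball a R. f differentiable (at z)"
    and lip: "L-lipschitz_on (cball a R) (grad f)" and "L > 0"
    and min: "\<forall>y\<in>cball a R. f a \<le> f y" and "grad f a = 0"
    and x: "x \<in> cball a (R/2)"
  shows "norm (grad f x) ^ 2 \<le> 4 * L * (f x - f a)"
proof -
  define u where "u = grad f x"
  define t where "t = 1 / (2 * L)"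
  have "0 \<le> R" using order_trans[OF zero_le_dist x[unfolded mem_cball]] by simp
  have xR: "x \<in> cball a R" using x subset_cball[of "R/2" R a] \<open>0 \<le> R\<close> by auto
  have "norm u \<le> L * norm (x - a)"
    using lipschitz_on_normD[OF lip xR, of a] \<open>0 \<le> R\<close> \<open>grad f a = 0\<close> by (simp add: u_def)
  also have "\<dots> \<le> L * (R/2)"
    using x \<open>L > 0\<close> by (intro mult_left_mono) (auto simp: dist_norm norm_minus_commute)
  finally have "t * norm u \<le> R/4"
    using \<open>L > 0\<close> by (simp add: t_def field_simps)
  moreover have "dist a (x - t *\<^sub>R u) \<le> dist a x + t * norm u"
    using dist_triangle[of a "x - t *\<^sub>R u" x] \<open>L > 0\<close> by (simp add: dist_norm t_def)
  ultimately have step: "x - t *\<^sub>R u \<in> cball a R"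
    using x \<open>0 \<le> R\<close> by simp
  have "f a \<le> f (x - t *\<^sub>R u)" using min step by blast
  also have "\<dots> \<le> f x + u \<bullet> (- t *\<^sub>R u) + L * norm (- t *\<^sub>R u) ^ 2"
    using quadratic_upper_bound_of_lipschitz_grad[OF convex_cball diff lip xR step] by (simp add: u_def)
  also have "\<dots> = f x - (norm u) ^ 2 / (4 * L)"
    using \<open>L > 0\<close> by (simp add: t_def dot_square_norm power_mult_distrib power2_eq_square field_simps)
  finally show ?thesis
    using \<open>L > 0\<close> by (simp add: u_def field_simps)
qed

lemma Ck_on_2_local_min_grad_bound:
  fixes f :: "'a::euclidean_space \<Rightarrow> real"
  assumes "open V" and "a \<in> V" and "Ck_on (Suc (Suc k)) V f" and "local_min_at f a"
  shows "\<exists>L>0. \<exists>s>0. \<forall>x\<in>ball a s. norm (grad f x) \<le> 1 \<and> norm (grad f x) ^ 2 \<le> L * (f x - f a)"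
proof -
  obtain e where "e > 0" and e: "\<forall>y\<in>ball a e. f a \<le> f y"
    using assms(4) unfolding local_min_at_def by blast
  obtain R0 where "R0 > 0" "cball a R0 \<subseteq> V"
    using assms(1,2) open_contains_cball by blast
  define R where "R = min (e/2) R0"
  have "R > 0" using \<open>e > 0\<close> \<open>R0 > 0\<close> by (simp add: R_def)
  have RV: "cball a R \<subseteq> V" using \<open>cball a R0 \<subseteq> V\<close> by (auto simp: R_def)
  have min: "\<forall>y\<in>cball a R. f a \<le> f y" using e \<open>e > 0\<close> by (auto simp: R_def)
  have diff: "\<forall>z\<in>cball a R. f differentiable (at z)" using assms(3) RV by auto
  obtain L where "L > 0" and lip: "L-lipschitz_on (cball a R) (grad f)"
    using Ck_on_2_imp_grad_lipschitz[OF assms(3) compact_cball convex_cball RV] by blast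
  have "grad f a = 0" using assms(2,3,4) by (auto intro: local_min_at_imp_grad_eq_0)
  have "norm (grad f x) \<le> 1 \<and> norm (grad f x) ^ 2 \<le> 4 * L * (f x - f a)"
    if x: "x \<in> ball a (min (R/2) (1/L))" for x
  proof
    have "norm (grad f x) \<le> L * norm (x - a)"
      using lipschitz_on_normD[OF lip, of x a] x \<open>R > 0\<close> \<open>grad f a = 0\<close> by (simp add: dist_commute)
    also have "\<dots> \<le> L * (1/L)"
      using x \<open>L > 0\<close> by (intro mult_left_mono) (auto simp: dist_norm norm_minus_commute)
    finally show "norm (grad f x) \<le> 1" using \<open>L > 0\<close> by simp
    show "norm (grad f x) ^ 2 \<le> 4 * L * (f x - f a)"
      using x by (intro norm_grad_sq_le_at_min[OF diff lip \<open>L > 0\<close> min \<open>grad f a = 0\<close>]) auto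
  qed
  then show ?thesis
    using \<open>L > 0\<close> \<open>R > 0\<close> by (intro exI[of _ "4 * L"] conjI exI[of _ "min (R/2) (1/L)"]) auto
qed

lemma local_min_at_add:
  fixes f h :: "'a::metric_space \<Rightarrow> real"
  assumes "s > 0" and "\<forall>x\<in>ball a s. \<bar>h x - h a\<bar> \<le> f x - f a"
  shows "local_min_at (\<lambda>x. f x + h x) a"
  unfolding local_min_at_def using assms by force

theorem corollary3p9:
  fixes f :: "'a::euclidean_space \<Rightarrow> real" and xbar :: 'a and V :: "'a set"
    and r :: nat and c \<delta> w :: real
  assumes "r \<ge> 2" and "open V" and "xbar \<in> V" and "Ck_on r V f"
    and "c > 0" and "\<delta> > 0" and "w > 0"
    and "\<forall>x \<in> horn_nbhd r (crit_set f V) f xbar w \<inter> cball xbar \<delta>.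
           norm (grad f x) \<ge> c * infdist x (crit_set f V) ^ (r - 1)"
    and "local_min_at f xbar"
  shows "\<exists>\<epsilon>>0. \<forall>h :: 'a \<Rightarrow> real.
           (\<exists>\<rho>>0. \<forall>x\<in>cball xbar \<rho>. \<bar>h x - h xbar\<bar> \<le> \<epsilon> * norm (grad f x) ^ r)
           \<longrightarrow> local_min_at (\<lambda>x. f x + h x) xbar"
proof -
  obtain k where "r = Suc (Suc k)" using \<open>r \<ge> 2\<close> by (metis add_2_eq_Suc le_Suc_ex)
  then obtain L s where "L > 0" "s > 0"
    and bound: "\<forall>x\<in>ball xbar s. norm (grad f x) \<le> 1 \<and> norm (grad f x) ^ 2 \<le> L * (f x - f xbar)"
    using Ck_on_2_local_min_grad_bound[OF assms(2,3)] assms(4,9) by blast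
  have "local_min_at (\<lambda>x. f x + h x) xbar"
    if "\<rho> > 0" and h: "\<forall>x\<in>cball xbar \<rho>. \<bar>h x - h xbar\<bar> \<le> 1/L * norm (grad f x) ^ r" for h \<rho>
  proof (rule local_min_at_add[of "min s \<rho>"])
    show "min s \<rho> > 0" using \<open>s > 0\<close> \<open>\<rho> > 0\<close> by simp
    show "\<forall>x\<in>ball xbar (min s \<rho>). \<bar>h x - h xbar\<bar> \<le> f x - f xbar"
    proof
      fix x assume x: "x \<in> ball xbar (min s \<rho>)"
      then have grad_x: "norm (grad f x) \<le> 1" "norm (grad f x) ^ 2 \<le> L * (f x - f xbar)"
        using bound by auto
      have "\<bar>h x - h xbar\<bar> \<le> 1/L * norm (grad f x) ^ r" using h x by auto
      also have "\<dots> \<le> 1/L * norm (grad f x) ^ 2"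
        using grad_x(1) \<open>r \<ge> 2\<close> \<open>L > 0\<close> by (intro mult_left_mono power_decreasing) auto
      also have "\<dots> \<le> f x - f xbar"
        using grad_x(2) \<open>L > 0\<close> by (simp add: field_simps)
      finally show "\<bar>h x - h xbar\<bar> \<le> f x - f xbar" .
    qed
  qed
  then show ?thesis using \<open>L > 0\<close> by (intro exI[of _ "1/L"]) auto
qed

end
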